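(* Let $n,l,k$ be positive integers, let $\mu$ be an order-$(l+k)$ equivalence class and $\epsilon>0$. Fix $(\mathbf{i}^1,\mathbf{j}^1)\in\mu$ with $\mathbf{i}^1\in[n]^l$, $\mathbf{j}^1\in[n]^k$, and let $\gamma^l,\gamma^k$ be the equivalence classes of $\mathbf{i}^1$ and $\mathbf{j}^1$. For $a\in[l],b\in[k]$ let $\mathrm{sgn}(a,b)=+1$ if $\mathbf{i}^2_a=\mathbf{j}^2_b$ for all $(\mathbf{i}^2,\mathbf{j}^2)\in\mu$, and $\mathrm{sgn}(a,b)=-1$ if $\mathbf{i}^2_a\neq\mathbf{j}^2_b$ for all $(\mathbf{i}^2,\mathbf{j}^2)\in\mu$. Define, for $\mathbf{i}\in[n]^l,\mathbf{j}\in[n]^k$, $$\delta(\mathbf{i},\mathbf{j};\mu,\epsilon)=\mathbb{1}_{\mathbf{i}\in\gamma^l}+(1-\epsilon)\mathbb{1}_{\mathbf{i}\notin\gamma^l}+\mathbb{1}_{\mathbf{j}\in\gamma^k}+(1-\epsilon)\mathbb{1}_{\mathbf{j}\notin\gamma^k}+\sum_{a\in[l]}\sum_{b\in[k]}\mathrm{sgn}(a,b)\mathbb{1}_{\mathbf{i}_a=\mathbf{j}_b}.$$ Then for any $\mathbf{i}\in[n]^l$ and $\mathbf{j}\in[n]^k$, $(\mathbf{i},\mathbf{j})\in\mu$ if and only if $\delta(\mathbf{i},\mathbf{j};\mu,\epsilon)$ equals the maximum of $\delta(\cdot,\cdot;\mu,\epsilon)$ over $[n]^l\times[n]^k$.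
   Context: For $m\ge1$, the equivalence relation $\sim$ on $[n]^m$ relates $\mathbf{i}\sim\mathbf{j}$ iff $(i_1,\dots,i_m)=(\pi(j_1),\dots,\pi(j_m))$ for some $\pi\in S_n$; an order-$m$ equivalence class is an element of $[n]^m/_\sim$. All elements of one class share the same equality pattern among their entries, so $\mathrm{sgn}(a,b)$ is well defined. $(\mathbf{i},\mathbf{j})$ denotes concatenation of multi-indices. *)

theory Defs
  imports Complex_Main "HOL-Combinatorics.Permutations"
begin

definition tuples :: "nat \<Rightarrow> nat \<Rightarrow> nat list set" where
  "tuples n m = {xs. length xs = m \<and> set xs \<subseteq> {1..n}}"

definition idx_equiv :: "nat \<Rightarrow> nat \<Rightarrow> (nat list \<times> nat list) set" where
  "idx_equiv n m = {(i, j). i \<in> tuples n m \<and> j \<in> tuples n m \<and>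
      (\<exists>\<pi>. \<pi> permutes {1..n} \<and> i = map \<pi> j)}"

definition eq_classes :: "nat \<Rightarrow> nat \<Rightarrow> nat list set set" where
  "eq_classes n m = tuples n m // idx_equiv n m"

text \<open>sgn(a,b) for a class mu of order l+k (0-based a < l, b < k); the value 0 is
  a convention for the case that never occurs.\<close>
definition sgn_mu :: "nat list set \<Rightarrow> nat \<Rightarrow> nat \<Rightarrow> nat \<Rightarrow> real" where
  "sgn_mu \<mu> l a b =
     (if \<forall>p\<in>\<mu>. p ! a = p ! (l + b) then 1
      else if \<forall>p\<in>\<mu>. p ! a \<noteq> p ! (l + b) then -1 else 0)"

definition delta :: "nat list set \<Rightarrow> nat list set \<Rightarrow> nat list set \<Rightarrow> real
    \<Rightarrow> nat \<Rightarrow> nat \<Rightarrow> nat list \<Rightarrow> nat list \<Rightarrow> real" where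
  "delta \<mu> \<gamma>l \<gamma>k \<epsilon> l k i j =
     (if i \<in> \<gamma>l then 1 else 1 - \<epsilon>) + (if j \<in> \<gamma>k then 1 else 1 - \<epsilon>)
     + (\<Sum>a<l. \<Sum>b<k. sgn_mu \<mu> l a b * (if i ! a = j ! b then 1 else 0))"

end

theory Submission
  imports Defs
begin

text \<open>Two multi-indices are equivalent iff they have the same equality pattern among their
  entries; the class \<mu> is therefore the set of (i, j) whose within-i, within-j and cross
  i/j coincidences all agree with those of (i1, j1). The first two summands of delta
  reward the within-patterns (each loses \<epsilon> > 0 otherwise), and since sgn(a, b) = +1
  exactly at the cross coincidences of (i1, j1), the double sum is maximal precisely when
  the cross coincidences of (i, j) are the same. Thus (i1, j1) is a maximiser, and every
  maximiser lies in \<mu>.\<close>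

definition same_pattern :: "'a list \<Rightarrow> 'b list \<Rightarrow> bool" where
  "same_pattern xs ys \<longleftrightarrow> length xs = length ys \<and>
     (\<forall>a<length xs. \<forall>b<length xs. xs ! a = xs ! b \<longleftrightarrow> ys ! a = ys ! b)"

lemma same_pattern_refl: "same_pattern xs xs"
  by (simp add: same_pattern_def)

lemma same_pattern_sym: "same_pattern xs ys \<Longrightarrow> same_pattern ys xs"
  by (simp add: same_pattern_def)

lemma same_pattern_trans: "same_pattern xs ys \<Longrightarrow> same_pattern ys zs \<Longrightarrow> same_pattern xs zs"
  by (simp add: same_pattern_def)

lemma same_pattern_map: "inj_on f (set xs) \<Longrightarrow> same_pattern xs (map f xs)"
  by (auto simp: same_pattern_def dest: inj_onD)

lemma same_pattern_append_iff:
  assumes "length xs = length us"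
  shows "same_pattern (xs @ ys) (us @ vs) \<longleftrightarrow>
           same_pattern xs us \<and> same_pattern ys vs \<and>
           (\<forall>a<length xs. \<forall>b<length ys. xs ! a = ys ! b \<longleftrightarrow> us ! a = vs ! b)"
    (is "?lhs \<longleftrightarrow> ?rhs")
proof
  assume ?lhs
  then have len: "length ys = length vs"
    and pat: "\<And>a b. a < length xs + length ys \<Longrightarrow> b < length xs + length ys \<Longrightarrow>
                ((xs @ ys) ! a = (xs @ ys) ! b) = ((us @ vs) ! a = (us @ vs) ! b)"
    using assms by (auto simp: same_pattern_def)
  have "same_pattern xs us"
    unfolding same_pattern_def
  proof (intro conjI allI impI)
    fix a b assume "a < length xs" "b < length xs"
    then show "xs ! a = xs ! b \<longleftrightarrow> us ! a = us ! b"
      using pat[of a b] assms by (simp add: nth_append)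
  qed (rule assms)
  moreover have "same_pattern ys vs"
    unfolding same_pattern_def
  proof (intro conjI allI impI)
    fix a b assume "a < length ys" "b < length ys"
    then show "ys ! a = ys ! b \<longleftrightarrow> vs ! a = vs ! b"
      using pat[of "length xs + a" "length xs + b"] assms by (simp add: nth_append)
  qed (rule len)
  moreover have "\<forall>a<length xs. \<forall>b<length ys. xs ! a = ys ! b \<longleftrightarrow> us ! a = vs ! b"
  proof (intro allI impI)
    fix a b assume "a < length xs" "b < length ys"
    then show "xs ! a = ys ! b \<longleftrightarrow> us ! a = vs ! b"
      using pat[of a "length xs + b"] assms by (simp add: nth_append)
  qed
  ultimately show ?rhs by blast
next
  assume ?rhs
  then have len: "length ys = length vs"
    and cross: "\<And>a b. a < length xs \<Longrightarrow> b < length ys \<Longrightarrow> xs ! a = ys ! b \<longleftrightarrow> us ! a = vs ! b"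
    by (auto simp: same_pattern_def)
  have cross': "ys ! b = xs ! a \<longleftrightarrow> vs ! b = us ! a" if "a < length xs" "b < length ys" for a b
    using cross[OF that] by metis
  have "(xs @ ys) ! a = (xs @ ys) ! b \<longleftrightarrow> (us @ vs) ! a = (us @ vs) ! b"
    if "a < length xs + length ys" "b < length xs + length ys" for a b
    using that assms \<open>?rhs\<close> cross[of a "b - length xs"] cross'[of b "a - length xs"]
    by (cases "a < length xs"; cases "b < length xs")
       (auto simp: same_pattern_def nth_append)
  then show ?lhs
    using assms len by (simp add: same_pattern_def)
qed

lemma bij_betw_extends_to_permutation:
  assumes "finite S" "A \<subseteq> S" "B \<subseteq> S" "bij_betw f A B"
  obtains \<pi> where "\<pi> permutes S" "\<And>x. x \<in> A \<Longrightarrow> \<pi> x = f x"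
proof -
  have "card (S - A) = card (S - B)"
    using assms bij_betw_same_card[OF assms(4)] by (simp add: card_Diff_subset finite_subset)
  then obtain g where g: "bij_betw g (S - A) (S - B)"
    using assms(1) finite_same_card_bij by blast
  define \<pi> where "\<pi> x = (if x \<in> A then f x else if x \<in> S then g x else x)" for x
  have "bij_betw \<pi> A B"
    using assms(4) by (rule bij_betw_cong[THEN iffD1, rotated]) (simp add: \<pi>_def)
  moreover have "bij_betw \<pi> (S - A) (S - B)"
    using g by (rule bij_betw_cong[THEN iffD1, rotated]) (simp add: \<pi>_def)
  ultimately have "bij_betw \<pi> (A \<union> (S - A)) (B \<union> (S - B))"
    by (rule bij_betw_combine) blast
  then have "bij_betw \<pi> S S"
    using assms(2,3) by (simp add: Un_Diff_cancel Un_absorb1)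
  then have "\<pi> permutes S"
    by (rule bij_imp_permutes) (use assms(2) in \<open>auto simp: \<pi>_def\<close>)
  then show thesis
    by (rule that) (simp add: \<pi>_def)
qed

lemma same_pattern_imp_permutes:
  assumes "finite S" "set xs \<subseteq> S" "set ys \<subseteq> S" "same_pattern xs ys"
  obtains \<pi> where "\<pi> permutes S" "ys = map \<pi> xs"
proof -
  have len: "length ys = length xs"
    and pat: "\<And>a b. a < length xs \<Longrightarrow> b < length xs \<Longrightarrow> xs ! a = xs ! b \<longleftrightarrow> ys ! a = ys ! b"
    using assms(4) by (auto simp: same_pattern_def)
  define f where "f x = ys ! (SOME a. a < length xs \<and> xs ! a = x)" for x
  have f_nth: "f (xs ! a) = ys ! a" if "a < length xs" for a
  proof -
    have "\<exists>a'. a' < length xs \<and> xs ! a' = xs ! a"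
      using that by blast
    from someI_ex[OF this] show ?thesis
      using pat that unfolding f_def by blast
  qed
  have "bij_betw f (set xs) (set ys)"
  proof (rule bij_betw_imageI)
    show "inj_on f (set xs)"
      by (rule inj_onI) (auto simp: in_set_conv_nth f_nth pat)
    show "f ` set xs = set ys"
      using len by (force simp: in_set_conv_nth image_iff f_nth)
  qed
  then obtain \<pi> where \<pi>: "\<pi> permutes S" and \<pi>_f: "\<And>x. x \<in> set xs \<Longrightarrow> \<pi> x = f x"
    using bij_betw_extends_to_permutation assms(1-3) by metis
  have "ys = map \<pi> xs"
    by (rule nth_equalityI) (use len in \<open>auto simp: \<pi>_f f_nth\<close>)
  with \<pi> show thesis
    by (rule that)
qed

lemma idx_equiv_iff:
  "(xs, ys) \<in> idx_equiv n m \<longleftrightarrow> xs \<in> tuples n m \<and> ys \<in> tuples n m \<and> same_pattern xs ys"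
proof
  assume "(xs, ys) \<in> idx_equiv n m"
  then obtain \<pi> where \<pi>: "\<pi> permutes {1..n}" and xs: "xs = map \<pi> ys"
    and in_tuples: "xs \<in> tuples n m" "ys \<in> tuples n m"
    unfolding idx_equiv_def by blast
  have "inj_on \<pi> (set ys)"
    using permutes_inj[OF \<pi>] by (rule inj_on_subset) simp
  then have "same_pattern ys xs"
    unfolding xs by (rule same_pattern_map)
  with in_tuples show "xs \<in> tuples n m \<and> ys \<in> tuples n m \<and> same_pattern xs ys"
    by (blast intro: same_pattern_sym)
next
  assume in_tuples: "xs \<in> tuples n m \<and> ys \<in> tuples n m \<and> same_pattern xs ys"
  then have "set ys \<subseteq> {1..n}" "set xs \<subseteq> {1..n}" "same_pattern ys xs"
    by (auto simp: tuples_def intro: same_pattern_sym)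
  then obtain \<pi> where "\<pi> permutes {1..n}" "xs = map \<pi> ys"
    using same_pattern_imp_permutes[OF finite_atLeastAtMost] by blast
  with in_tuples show "(xs, ys) \<in> idx_equiv n m"
    unfolding idx_equiv_def by blast
qed

lemma idx_equiv_class:
  "xs \<in> tuples n m \<Longrightarrow> idx_equiv n m `` {xs} = {ys \<in> tuples n m. same_pattern xs ys}"
  by (simp add: Image_singleton idx_equiv_iff)

lemma eq_class_eq:
  assumes "\<mu> \<in> eq_classes n m" "xs \<in> \<mu>"
  shows "\<mu> = {ys \<in> tuples n m. same_pattern xs ys}"
proof -
  from assms(1) obtain zs where "zs \<in> tuples n m" "\<mu> = idx_equiv n m `` {zs}"
    unfolding eq_classes_def by (rule quotientE)
  then have \<mu>: "\<mu> = {ys \<in> tuples n m. same_pattern zs ys}"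
    by (simp add: idx_equiv_class)
  with assms(2) have "same_pattern zs xs"
    by blast
  then have "same_pattern xs ys \<longleftrightarrow> same_pattern zs ys" for ys
    by (meson same_pattern_sym same_pattern_trans)
  then show ?thesis
    unfolding \<mu> by blast
qed

lemma sgn_mu_eq_class:
  assumes "\<mu> \<in> eq_classes n (l + k)" "xs @ ys \<in> \<mu>" "length xs = l" "a < l" "b < k"
  shows "sgn_mu \<mu> l a b = (if xs ! a = ys ! b then 1 else -1)"
proof -
  have "p ! a = p ! (l + b) \<longleftrightarrow> xs ! a = ys ! b" if "p \<in> \<mu>" for p
  proof -
    have "same_pattern (xs @ ys) p" "length (xs @ ys) = l + k"
      using that eq_class_eq[OF assms(1,2)] assms(2) by (auto simp: tuples_def)
    then have "(xs @ ys) ! a = (xs @ ys) ! (l + b) \<longleftrightarrow> p ! a = p ! (l + b)"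
      using assms(4,5) unfolding same_pattern_def by simp
    then show ?thesis
      using assms(3,4) by (simp add: nth_append)
  qed
  then show ?thesis
    using assms(2) unfolding sgn_mu_def by auto
qed

lemma sum_signed_indicator_le:
  fixes A :: "'a set" and P Q :: "'a \<Rightarrow> bool"
  defines "s R \<equiv> (\<Sum>x\<in>A. (if P x then 1 else -1) * (if R x then 1 else 0) :: real)"
  assumes "finite A"
  shows "s Q \<le> s P" and "s Q = s P \<longleftrightarrow> (\<forall>x\<in>A. P x \<longleftrightarrow> Q x)"
proof -
  define d where
    "d x = (if P x then 1 else 0) - (if P x then 1 else -1) * (if Q x then 1 else 0 :: real)" for x
  have d_nonneg: "d x \<ge> 0" for x
    by (simp add: d_def)
  have "s P - s Q = sum d A"
    unfolding s_def d_def sum_subtractf[symmetric] by (rule sum.cong) auto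
  moreover have "sum d A \<ge> 0"
    using d_nonneg by (simp add: sum_nonneg)
  moreover have "sum d A = 0 \<longleftrightarrow> (\<forall>x\<in>A. P x \<longleftrightarrow> Q x)"
    using assms(2) d_nonneg by (simp add: sum_nonneg_eq_0_iff d_def) blast
  ultimately show "s Q \<le> s P" "s Q = s P \<longleftrightarrow> (\<forall>x\<in>A. P x \<longleftrightarrow> Q x)"
    by auto
qed

lemma delta_le_and_eq_iff:
  assumes \<mu>: "\<mu> \<in> eq_classes n (l + k)" "i1 @ j1 \<in> \<mu>"
    and in_tuples: "i1 \<in> tuples n l" "j1 \<in> tuples n k" "i \<in> tuples n l" "j \<in> tuples n k"
    and "\<epsilon> > 0"
  defines "D \<equiv> delta \<mu> (idx_equiv n l `` {i1}) (idx_equiv n k `` {j1}) \<epsilon> l k"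
  shows "D i j \<le> D i1 j1" and "D i j = D i1 j1 \<longleftrightarrow> i @ j \<in> \<mu>"
proof -
  define cross where "cross i' j' = (\<Sum>(a, b)\<in>{..<l} \<times> {..<k}.
      (if i1 ! a = j1 ! b then 1 else -1) * (if i' ! a = j' ! b then 1 else 0 :: real))"
    for i' j' :: "nat list"
  have len: "length i1 = l" "length j1 = k" "length i = l" "length j = k"
    using in_tuples by (auto simp: tuples_def)
  have D_eq: "D i' j' = (if same_pattern i1 i' then 1 else 1 - \<epsilon>)
      + (if same_pattern j1 j' then 1 else 1 - \<epsilon>) + cross i' j'"
    if "i' \<in> tuples n l" "j' \<in> tuples n k" for i' j'
    using that in_tuples(1,2)
    by (simp add: D_def delta_def cross_def idx_equiv_class sum.cartesian_product[symmetric]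
        sgn_mu_eq_class[OF \<mu> len(1)])
  note signed_sum = sum_signed_indicator_le[of "{..<l} \<times> {..<k}"
      "\<lambda>(a, b). i1 ! a = j1 ! b" "\<lambda>(a, b). i ! a = j ! b"]
  have cross_le: "cross i j \<le> cross i1 j1"
    using signed_sum(1) by (simp add: cross_def case_prod_unfold)
  have cross_eq: "cross i j = cross i1 j1 \<longleftrightarrow>
                    (\<forall>a<l. \<forall>b<k. i1 ! a = j1 ! b \<longleftrightarrow> i ! a = j ! b)"
    using signed_sum(2) by (simp add: cross_def case_prod_unfold Ball_def) blast
  have "i @ j \<in> \<mu> \<longleftrightarrow> same_pattern (i1 @ j1) (i @ j)"
    using eq_class_eq[OF \<mu>] in_tuples(3,4) by (auto simp: tuples_def)
  also have "\<dots> \<longleftrightarrow> same_pattern i1 i \<and> same_pattern j1 j \<and>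
                     (\<forall>a<l. \<forall>b<k. i1 ! a = j1 ! b \<longleftrightarrow> i ! a = j ! b)"
    using len by (simp add: same_pattern_append_iff)
  finally show "D i j \<le> D i1 j1" "D i j = D i1 j1 \<longleftrightarrow> i @ j \<in> \<mu>"
    using D_eq in_tuples cross_le cross_eq \<open>\<epsilon> > 0\<close> by (auto simp: same_pattern_refl)
qed

lemma finite_tuples: "finite (tuples n m)"
  unfolding tuples_def by (rule finite_subset[OF _ finite_lists_length_eq[of "{1..n}" m]]) auto

theorem mainTheorem6:
  fixes n l k :: nat and \<mu> :: "nat list set" and \<epsilon> :: real
    and i1 j1 :: "nat list"
  assumes "n > 0" "l > 0" "k > 0"
    and "\<mu> \<in> eq_classes n (l + k)"
    and "\<epsilon> > 0"
    and "i1 \<in> tuples n l" "j1 \<in> tuples n k" "i1 @ j1 \<in> \<mu>"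
  shows "\<forall>i\<in>tuples n l. \<forall>j\<in>tuples n k.
           (i @ j \<in> \<mu> \<longleftrightarrow>
            delta \<mu> (idx_equiv n l `` {i1}) (idx_equiv n k `` {j1}) \<epsilon> l k i j =
            Max ((\<lambda>(i', j'). delta \<mu> (idx_equiv n l `` {i1}) (idx_equiv n k `` {j1}) \<epsilon> l k i' j')
                   ` (tuples n l \<times> tuples n k)))"
proof -
  define D where "D = delta \<mu> (idx_equiv n l `` {i1}) (idx_equiv n k `` {j1}) \<epsilon> l k"
  note delta_bounds = delta_le_and_eq_iff[OF assms(4,8,6,7) _ _ assms(5), folded D_def]
  have "Max ((\<lambda>(i', j'). D i' j') ` (tuples n l \<times> tuples n k)) = D i1 j1"
    using assms(6,7) delta_bounds(1)
    by (intro Max_eqI) (auto simp: finite_tuples intro: rev_image_eqI[of "(i1, j1)"])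
  then show ?thesis
    using delta_bounds(2) by (simp add: D_def)
qed

end
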